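(* Let $D$ be a convex subset of a topological vector space $X$, $K$ a nonempty set, and $C$ a cone in a topological vector space $Y$. Let $f: D\times K\rightrightarrows Y$ and $g: D\times D\rightrightarrows Y$ be set-valued mappings satisfying: (i) for each $y\in K$, the set $\{x\in D: f(x,y)\subseteq C\}$ is compactly closed; (ii) for any nonempty finite subset $A$ of $D$ and all $z\in\operatorname{co}(A)$, there exists $x\in A$ such that $g(x,z)\subseteq -C$; (iii) for each $y\in K$ there exists $z\in D$ such that for all $x\in D$, $g(z,x)\subseteq -C$ implies $f(x,y)\subseteq C$; (iv) there exist a nonempty compact subset $M$ of $D$ and a finite subset $L$ of $K$ such that for each $x\in D\setminus M$ there exists $y\in L$ with $f(x,y)\not\subseteq C$. Then there exists $\bar x\in M$ such that $f(\bar x,y)\subseteq C$ for all $y\in K$.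
   Context: A subset $A$ of a topological space $X$ is compactly closed if for every compact subset $M$ of $X$ the set $A\cap M$ is closed in $M$. $\operatorname{co}(A)$ denotes the convex hull of $A$. *)

theory Defs
  imports "HOL-Analysis.Analysis"
begin

definition tvs :: "'a::{real_vector,topological_space} itself \<Rightarrow> bool" where
  "tvs _ \<longleftrightarrow>
     continuous_on (UNIV :: ('a \<times> 'a) set) (\<lambda>p. fst p + snd p) \<and>
     continuous_on (UNIV :: (real \<times> 'a) set) (\<lambda>p. fst p *\<^sub>R snd p)"

definition compactly_closed :: "'a::topological_space set \<Rightarrow> bool" where
  "compactly_closed A \<longleftrightarrow> (\<forall>M. compact M \<longrightarrow> closedin (top_of_set M) (A \<inter> M))"

end

theory Submission
  imports Defs "HOL-Homology.Homology"
begin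

(* For y in K choose z(y) in D by (iii). Conditions (ii) and (iii) say that y \<mapsto> z(y) is a KKM map
   for the compactly closed solution sets F(y) = {x \<in> D. f(x,y) \<subseteq> C}: the convex hull of
   {z(y) | y \<in> Y} lies in the union of the F(y), y \<in> Y, for every finite Y \<subseteq> K. Fan's KKM
   lemma in a topological vector space, obtained by pulling the sets back along the barycentric map
   of the standard simplex and applying Brouwer's theorem there, gives the finite intersection
   property. By (iv) the intersection over L plus one further index lies in the compact set M, so
   the traces of the F(y) on M have a common point.

   The simplex dimension depends on the finite subfamily, so Brouwer's theorem is needed in the
   coordinate spaces of nat \<Rightarrow> real rather than for a fixed euclidean type. It follows from the
   non-contractibility of the n-sphere: for a fixed-point-free self-map F of the n-ball the
   normalised displacement x - F x would be homotopic on the sphere both to the identity and to a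
   constant. *)

section \<open>Brouwer's theorem for coordinate balls\<close>

lemma continuous_on_coordinate [continuous_intros]: "continuous_on S (\<lambda>x. x i)"
  by (rule continuous_on_subset[OF continuous_on_product_coordinates]) simp

(* Indices run over 0..n: nball n is the unit ball of R^(n+1), bounded by the n-sphere nsphere n. *)
definition sqnorm :: "nat \<Rightarrow> (nat \<Rightarrow> real) \<Rightarrow> real" where
  "sqnorm n x = (\<Sum>i\<le>n. (x i)\<^sup>2)"

definition nball :: "nat \<Rightarrow> (nat \<Rightarrow> real) set" where
  "nball n = {x. sqnorm n x \<le> 1 \<and> (\<forall>i>n. x i = 0)}"

definition nnormalize :: "nat \<Rightarrow> (nat \<Rightarrow> real) \<Rightarrow> nat \<Rightarrow> real" where
  "nnormalize n x = (\<lambda>i. x i / sqrt (sqnorm n x))"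

lemma topspace_nsphere_sqnorm:
  "topspace (nsphere n) = {x. sqnorm n x = 1 \<and> (\<forall>i>n. x i = 0)}"
  by (simp add: nsphere sqnorm_def)

lemma not_contractible_topspace_nsphere: "\<not> contractible (topspace (nsphere n))"
proof -
  have "nsphere n = top_of_set (topspace (nsphere n))"
    by (simp add: nsphere euclidean_product_topology)
  then show ?thesis
    using non_contractible_space_nsphere[of n] by (metis contractible_space_top_of_set)
qed

lemma sqnorm_scale: "sqnorm n (\<lambda>i. c * x i) = c\<^sup>2 * sqnorm n x"
  by (simp add: sqnorm_def sum_distrib_left power_mult_distrib)

lemma sqnorm_pos:
  assumes "\<forall>i>n. x i = 0" "x \<noteq> (\<lambda>_. 0)"
  shows "0 < sqnorm n x"
proof -
  obtain j where j: "x j \<noteq> 0" using assms(2) by auto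
  with assms(1) have "j \<le> n" by (meson not_le)
  then have "(x j)\<^sup>2 \<le> sqnorm n x"
    unfolding sqnorm_def by (intro member_le_sum) auto
  moreover have "0 < (x j)\<^sup>2" using j by simp
  ultimately show ?thesis by linarith
qed

lemma continuous_on_sqnorm: "continuous_on S (sqnorm n)"
  unfolding sqnorm_def by (intro continuous_intros)

lemma nnormalize_in_nsphere:
  assumes "\<forall>i>n. x i = 0" "x \<noteq> (\<lambda>_. 0)"
  shows "nnormalize n x \<in> topspace (nsphere n)"
proof -
  have pos: "0 < sqnorm n x" using sqnorm_pos[OF assms] .
  have "sqnorm n (nnormalize n x) = sqnorm n x / sqnorm n x"
    using pos by (simp add: sqnorm_def nnormalize_def power_divide flip: sum_divide_distrib)
  with pos assms(1) show ?thesis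
    by (simp add: topspace_nsphere_sqnorm nnormalize_def)
qed

lemma nnormalize_nsphere: "x \<in> topspace (nsphere n) \<Longrightarrow> nnormalize n x = x"
  by (simp add: topspace_nsphere_sqnorm nnormalize_def)

lemma continuous_on_nnormalize:
  assumes "continuous_on A v" and "\<And>p. p \<in> A \<Longrightarrow> v p \<noteq> (\<lambda>_. 0) \<and> (\<forall>i>n. v p i = 0)"
  shows "continuous_on A (\<lambda>p. nnormalize n (v p))"
  unfolding nnormalize_def
proof (intro continuous_on_coordinatewise_then_product continuous_on_divide ballI)
  show "continuous_on A (\<lambda>p. v p i)" for i
    using assms(1) by (rule continuous_on_product_then_coordinatewise)
  show "continuous_on A (\<lambda>p. sqrt (sqnorm n (v p)))"
    by (intro continuous_intros continuous_on_compose2[OF continuous_on_sqnorm assms(1)]) auto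
  show "sqrt (sqnorm n (v p)) \<noteq> 0" if "p \<in> A" for p
    using sqnorm_pos[of n "v p"] assms(2)[OF that] by simp
qed

lemma homotopic_nnormalize:
  fixes v :: "real \<times> 'a::topological_space \<Rightarrow> nat \<Rightarrow> real"
  assumes cont: "continuous_on ({0..1} \<times> S) v"
    and v: "\<And>p. p \<in> {0..1} \<times> S \<Longrightarrow> v p \<noteq> (\<lambda>_. 0) \<and> (\<forall>i>n. v p i = 0)"
    and f: "\<And>x. x \<in> S \<Longrightarrow> nnormalize n (v (0, x)) = f x"
    and g: "\<And>x. x \<in> S \<Longrightarrow> nnormalize n (v (1, x)) = g x"
  shows "homotopic_with_canon (\<lambda>_. True) S (topspace (nsphere n)) f g"
proof -
  have "continuous_on ({0..1} \<times> S) (\<lambda>p. nnormalize n (v p))"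
    using cont v by (rule continuous_on_nnormalize)
  moreover have "(\<lambda>p. nnormalize n (v p)) \<in> {0..1} \<times> S \<rightarrow> topspace (nsphere n)"
    using v by (auto intro!: nnormalize_in_nsphere)
  ultimately show ?thesis
    using f g by (subst homotopic_with) (auto intro!: exI[of _ "\<lambda>p. nnormalize n (v p)"])
qed

lemma scaled_nsphere_in_nball:
  assumes "x \<in> topspace (nsphere n)" "t \<in> {0..1}"
  shows "(\<lambda>i. t * x i) \<in> nball n"
proof -
  have "t\<^sup>2 \<le> 1" using assms(2) by (simp add: power_le_one)
  then show ?thesis
    using assms(1) by (simp add: nball_def topspace_nsphere_sqnorm sqnorm_scale)
qed

lemma nsphere_vanish: "x \<in> topspace (nsphere n) \<Longrightarrow> n < i \<Longrightarrow> x i = 0"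
  by (simp add: topspace_nsphere_sqnorm)

context
  fixes n :: nat and F :: "(nat \<Rightarrow> real) \<Rightarrow> nat \<Rightarrow> real"
  assumes contF: "continuous_on (nball n) F"
    and F_nball: "F \<in> nball n \<rightarrow> nball n"
    and fixpoint_free: "\<And>x. x \<in> nball n \<Longrightarrow> F x \<noteq> x"
begin

lemma map_nball_vanish: "x \<in> nball n \<Longrightarrow> n < i \<Longrightarrow> F x i = 0"
  using F_nball by (auto simp: nball_def)

lemma nsphere_displacement_nonzero:
  assumes t: "t \<in> {0..1}" and x: "x \<in> topspace (nsphere n)"
  shows "(\<lambda>i. x i - t * F x i) \<noteq> (\<lambda>_. 0)"
proof
  assume "(\<lambda>i. x i - t * F x i) = (\<lambda>_. 0)"
  then have x_eq: "x i = t * F x i" for i by (metis diff_eq_eq add_0 fun_cong)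
  have x_nball: "x \<in> nball n" using scaled_nsphere_in_nball[OF x, of 1] by simp
  have "1 = sqnorm n x" using x by (simp add: topspace_nsphere_sqnorm)
  also have "\<dots> = sqnorm n (\<lambda>i. t * F x i)" by (simp add: sqnorm_def x_eq)
  also have "\<dots> = t\<^sup>2 * sqnorm n (F x)" by (rule sqnorm_scale)
  also have "\<dots> \<le> t\<^sup>2" using F_nball x_nball t
    by (auto simp: nball_def intro: mult_left_le)
  finally have "t = 1" using t mult_left_le[of t t] by (simp add: power2_eq_square)
  then have "F x = x" using x_eq by (simp add: fun_eq_iff)
  with fixpoint_free x_nball show False by blast
qed

lemma nball_displacement_nonzero:
  assumes "y \<in> nball n"
  shows "(\<lambda>i. y i - F y i) \<noteq> (\<lambda>_. 0)"
proof
  assume "(\<lambda>i. y i - F y i) = (\<lambda>_. 0)"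
  then have "F y = y" by (simp add: fun_eq_iff)
  with fixpoint_free assms show False by blast
qed

lemma homotopic_id_nsphere_displacement:
  "homotopic_with_canon (\<lambda>_. True) (topspace (nsphere n)) (topspace (nsphere n))
     id (\<lambda>x. nnormalize n (\<lambda>i. x i - F x i))"
proof (rule homotopic_nnormalize)
  let ?S = "topspace (nsphere n)"
  have "x \<in> nball n" if "x \<in> ?S" for x
    using scaled_nsphere_in_nball[OF that, of 1] by simp
  then have contFS: "continuous_on ({0..1} \<times> ?S) (\<lambda>p. F (snd p))"
    by (intro continuous_on_compose2[OF contF continuous_on_snd]) auto
  show "continuous_on ({0..1} \<times> ?S) (\<lambda>(t, x) i. x i - t * F x i)"
    unfolding case_prod_beta
    by (intro continuous_intros continuous_on_product_then_coordinatewise[OF continuous_on_snd]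
        continuous_on_product_then_coordinatewise[OF contFS])
  show "(\<lambda>(t, x) i. x i - t * F x i) p \<noteq> (\<lambda>_. 0) \<and> (\<forall>i>n. (\<lambda>(t, x) i. x i - t * F x i) p i = 0)"
    if "p \<in> {0..1} \<times> ?S" for p
    using that nsphere_displacement_nonzero \<open>\<And>x. x \<in> ?S \<Longrightarrow> x \<in> nball n\<close>
    by (auto simp: nsphere_vanish map_nball_vanish)
  show "nnormalize n ((\<lambda>(t, x) i. x i - t * F x i) (0, x)) = id x" if "x \<in> ?S" for x
    using that nnormalize_nsphere by simp
qed simp

lemma homotopic_const_nsphere_displacement:
  "homotopic_with_canon (\<lambda>_. True) (topspace (nsphere n)) (topspace (nsphere n))
     (\<lambda>_. nnormalize n (\<lambda>i. - F (\<lambda>_. 0) i)) (\<lambda>x. nnormalize n (\<lambda>i. x i - F x i))"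
proof (rule homotopic_nnormalize)
  let ?S = "topspace (nsphere n)"
  have "continuous_on ({0..1} \<times> ?S) (\<lambda>p. (\<lambda>j. fst p * snd p j))"
    by (intro continuous_on_coordinatewise_then_product continuous_intros
        continuous_on_product_then_coordinatewise[OF continuous_on_snd])
  then have contFS: "continuous_on ({0..1} \<times> ?S) (\<lambda>p. F (\<lambda>j. fst p * snd p j))"
    by (rule continuous_on_compose2[OF contF]) (auto simp: scaled_nsphere_in_nball)
  show "continuous_on ({0..1} \<times> ?S) (\<lambda>(t, x) i. t * x i - F (\<lambda>j. t * x j) i)"
    unfolding case_prod_beta
    by (intro continuous_intros continuous_on_product_then_coordinatewise[OF continuous_on_snd]
        continuous_on_product_then_coordinatewise[OF contFS])
  show "(\<lambda>(t, x) i. t * x i - F (\<lambda>j. t * x j) i) p \<noteq> (\<lambda>_. 0) \<and>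
      (\<forall>i>n. (\<lambda>(t, x) i. t * x i - F (\<lambda>j. t * x j) i) p i = 0)"
    if "p \<in> {0..1} \<times> ?S" for p
    using that nball_displacement_nonzero scaled_nsphere_in_nball
    by (auto simp: nsphere_vanish map_nball_vanish)
qed simp_all

end

theorem brouwer_nball:
  assumes "continuous_on (nball n) F" and "F \<in> nball n \<rightarrow> nball n"
  shows "\<exists>x\<in>nball n. F x = x"
proof (rule ccontr)
  assume "\<not> (\<exists>x\<in>nball n. F x = x)"
  then have "contractible (topspace (nsphere n))"
    using homotopic_id_nsphere_displacement[OF assms] homotopic_const_nsphere_displacement[OF assms]
    unfolding contractible_def by (blast intro: homotopic_with_trans homotopic_with_symD)
  then show False
    using not_contractible_topspace_nsphere by blast
qed

lemma standard_simplex_iff: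
  "x \<in> standard_simplex n \<longleftrightarrow> (\<forall>i. 0 \<le> x i) \<and> (\<forall>i>n. x i = 0) \<and> (\<Sum>i\<le>n. x i) = 1"
proof -
  have "x i \<le> 1" if "\<forall>i. 0 \<le> x i" "\<forall>i>n. x i = 0" "(\<Sum>i\<le>n. x i) = 1" for i
  proof (cases "i \<le> n")
    case True
    then have "x i \<le> (\<Sum>i\<le>n. x i)" using that(1) by (intro member_le_sum) auto
    with that(3) show ?thesis by simp
  qed (use that(2) in auto)
  then show ?thesis by (auto simp: standard_simplex_def)
qed

lemma standard_simplex_support_nonempty:
  assumes "x \<in> standard_simplex n"
  shows "\<exists>i\<le>n. 0 < x i"
proof (rule ccontr)
  assume "\<not> (\<exists>i\<le>n. 0 < x i)"
  with assms have "\<forall>i\<in>{..n}. x i = 0"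
    by (auto simp: standard_simplex_iff not_less intro: order.antisym)
  with assms show False by (simp add: standard_simplex_iff)
qed

lemma closed_standard_simplex: "closed (standard_simplex n)"
  using closedin_standard_simplex[of n] by (simp add: euclidean_product_topology)

lemma compact_standard_simplex: "compact (standard_simplex n)"
  using compactin_standard_simplex[of n] by (simp add: euclidean_product_topology)

lemma standard_simplex_subset_nball: "standard_simplex n \<subseteq> nball n"
proof
  fix x assume x: "x \<in> standard_simplex n"
  have "sqnorm n x \<le> (\<Sum>i\<le>n. x i)"
    unfolding sqnorm_def
    using x by (intro sum_mono) (auto simp: standard_simplex_def power2_eq_square mult_left_le)
  with x show "x \<in> nball n" by (simp add: standard_simplex_def nball_def)
qed

definition simplex_retraction :: "nat \<Rightarrow> (nat \<Rightarrow> real) \<Rightarrow> nat \<Rightarrow> real" where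
  "simplex_retraction n x =
     (let P = (\<Sum>j\<le>n. max (x j) 0)
      in (\<lambda>i. if i \<le> n then (max (x i) 0 + max 0 (1 - P) / real (Suc n)) / max 1 P else 0))"

lemma simplex_retraction_in_standard_simplex: "simplex_retraction n x \<in> standard_simplex n"
proof -
  define P where "P = (\<Sum>j\<le>n. max (x j) (0::real))"
  have "(\<Sum>i\<le>n. max (x i) 0 + max 0 (1 - P) / real (Suc n)) = max 1 P"
    by (simp add: sum.distrib P_def)
  then have "(\<Sum>i\<le>n. simplex_retraction n x i) = 1"
    by (simp add: simplex_retraction_def Let_def P_def flip: sum_divide_distrib)
  then show ?thesis
    by (auto simp: standard_simplex_iff simplex_retraction_def Let_def)
qed

lemma simplex_retraction_id: "x \<in> standard_simplex n \<Longrightarrow> simplex_retraction n x = x"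
  by (auto simp: standard_simplex_iff simplex_retraction_def fun_eq_iff max_absorb1)

lemma continuous_on_simplex_retraction: "continuous_on S (simplex_retraction n)"
  unfolding simplex_retraction_def Let_def
proof (intro continuous_on_coordinatewise_then_product)
  fix i
  have "max 1 P \<noteq> (0::real)" for P by linarith
  then show "continuous_on S (\<lambda>x. if i \<le> n then (max (x i) 0 + max 0 (1 - (\<Sum>j\<le>n. max (x j) 0))
      / real (Suc n)) / max 1 (\<Sum>j\<le>n. max (x j) 0) else 0)"
    by (cases "i \<le> n") (auto intro!: continuous_intros)
qed

lemma standard_simplex_retract_of_nball: "standard_simplex n retract_of nball n"
  unfolding retract_of_def retraction_def
  using standard_simplex_subset_nball continuous_on_simplex_retraction
    simplex_retraction_in_standard_simplex simplex_retraction_id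
  by blast

theorem brouwer_standard_simplex:
  assumes "continuous_on (standard_simplex n) f" "f \<in> standard_simplex n \<rightarrow> standard_simplex n"
  shows "\<exists>x\<in>standard_simplex n. f x = x"
  using retract_fixpoint_property[OF standard_simplex_retract_of_nball brouwer_nball assms] by blast

section \<open>The KKM lemma\<close>

(* Without a common point the normalised distances to the E i define a self-map of the simplex;
   at a fixed point x every coordinate i with x \<in> E i vanishes, contradicting the covering
   hypothesis. *)
theorem kkm_standard_simplex:
  assumes closed: "\<And>i. i \<le> n \<Longrightarrow> closed (E i)"
    and cover: "\<And>x. x \<in> standard_simplex n \<Longrightarrow> \<exists>i\<le>n. 0 < x i \<and> x \<in> E i"
  shows "\<exists>x\<in>standard_simplex n. \<forall>i\<le>n. x \<in> E i"
proof (rule ccontr)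
  assume no_common: "\<not> (\<exists>x\<in>standard_simplex n. \<forall>i\<le>n. x \<in> E i)"
  have nonempty: "E i \<noteq> {}" if "i \<le> n" for i
    using cover[of "\<lambda>j. if j = i then 1 else 0"] that by (auto split: if_splits)
  define S where "S x = (\<Sum>i\<le>n. infdist x (E i))" for x
  have S_pos: "0 < S x" if x: "x \<in> standard_simplex n" for x
  proof -
    obtain i where i: "i \<le> n" "x \<notin> E i"
      using no_common x by blast
    then have "infdist x (E i) \<noteq> 0"
      using in_closed_iff_infdist_zero[OF closed[OF i(1)] nonempty[OF i(1)]] by simp
    then have "0 < infdist x (E i)"
      using infdist_nonneg[of x "E i"] by linarith
    with i(1) show ?thesis
      unfolding S_def by (intro sum_pos2[of "{..n}" i]) (simp_all add: infdist_nonneg)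
  qed
  define h where "h x = (\<lambda>i. if i \<le> n then infdist x (E i) / S x else 0)" for x
  have "\<exists>x\<in>standard_simplex n. h x = x"
  proof (rule brouwer_standard_simplex)
    show "continuous_on (standard_simplex n) h"
      unfolding h_def S_def
    proof (intro continuous_on_coordinatewise_then_product)
      fix i
      show "continuous_on (standard_simplex n)
          (\<lambda>x. if i \<le> n then infdist x (E i) / (\<Sum>i\<le>n. infdist x (E i)) else 0)"
        using S_pos unfolding S_def by (cases "i \<le> n") (auto intro!: continuous_intros, force)
    qed
    show "h \<in> standard_simplex n \<rightarrow> standard_simplex n"
    proof
      fix x assume x: "x \<in> standard_simplex n"
      have "(\<Sum>i\<le>n. h x i) = S x / S x"
        by (simp add: h_def S_def flip: sum_divide_distrib)
      then show "h x \<in> standard_simplex n"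
        using S_pos[OF x] by (simp add: standard_simplex_iff h_def infdist_nonneg)
    qed
  qed
  then obtain x where x: "x \<in> standard_simplex n" and hx: "h x = x" by blast
  then obtain i where "i \<le> n" "0 < x i" "x \<in> E i" using cover by blast
  then have "h x i = 0" by (simp add: h_def)
  with hx \<open>0 < x i\<close> show False by simp
qed

lemma tvs_continuous_on_add:
  fixes f g :: "'b::topological_space \<Rightarrow> 'a::{real_vector,topological_space}"
  assumes "tvs TYPE('a)" "continuous_on S f" "continuous_on S g"
  shows "continuous_on S (\<lambda>x. f x + g x)"
proof -
  have "continuous_on UNIV (\<lambda>p::'a \<times> 'a. fst p + snd p)"
    using assms(1) by (simp add: tvs_def)
  from continuous_on_compose2[OF this continuous_on_Pair[OF assms(2,3)]] show ?thesis by simp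
qed

lemma tvs_continuous_on_scaleR:
  fixes f :: "'b::topological_space \<Rightarrow> real" and g :: "'b \<Rightarrow> 'a::{real_vector,topological_space}"
  assumes "tvs TYPE('a)" "continuous_on S f" "continuous_on S g"
  shows "continuous_on S (\<lambda>x. f x *\<^sub>R g x)"
proof -
  have "continuous_on UNIV (\<lambda>p::real \<times> 'a. fst p *\<^sub>R snd p)"
    using assms(1) by (simp add: tvs_def)
  from continuous_on_compose2[OF this continuous_on_Pair[OF assms(2,3)]] show ?thesis by simp
qed

lemma tvs_continuous_on_sum:
  fixes f :: "'i \<Rightarrow> 'b::topological_space \<Rightarrow> 'a::{real_vector,topological_space}"
  assumes "tvs TYPE('a)" "\<And>i. i \<in> I \<Longrightarrow> continuous_on S (f i)"
  shows "continuous_on S (\<lambda>x. \<Sum>i\<in>I. f i x)"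
  using assms(2)
proof (induction I rule: infinite_finite_induct)
  case (insert i I)
  then show ?case by (simp add: tvs_continuous_on_add[OF assms(1)])
qed auto

lemma barycentre_in_convex_hull:
  fixes p :: "nat \<Rightarrow> 'a::real_vector"
  assumes x: "x \<in> standard_simplex n"
  shows "(\<Sum>i\<le>n. x i *\<^sub>R p i) \<in> convex hull (p ` {i. i \<le> n \<and> 0 < x i})"
proof -
  define B where "B = {i. i \<le> n \<and> 0 < x i}"
  have B: "B \<subseteq> {..n}" by (auto simp: B_def)
  have vanish: "\<forall>i\<in>{..n} - B. x i = 0"
    using x by (auto simp: B_def standard_simplex_iff not_less intro: order.antisym)
  have "(\<Sum>i\<in>B. x i) = 1"
    using sum.mono_neutral_right[OF finite_atMost B vanish] x by (simp add: standard_simplex_iff)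
  then have "(\<Sum>i\<in>B. x i *\<^sub>R p i) \<in> convex hull (p ` B)"
    using finite_subset[OF B] by (intro convex_sum) (auto simp: B_def intro: hull_inc)
  moreover have "(\<Sum>i\<le>n. x i *\<^sub>R p i) = (\<Sum>i\<in>B. x i *\<^sub>R p i)"
    using vanish by (intro sum.mono_neutral_right[OF finite_atMost B]) simp
  ultimately show ?thesis by (simp add: B_def)
qed

lemma closed_preimage_compactly_closed:
  assumes "compact S" and "closed S" and "continuous_on S \<phi>" and "compactly_closed G"
  shows "closed (S \<inter> \<phi> -` G)"
proof -
  have "compact (\<phi> ` S)"
    using assms(3,1) by (rule compact_continuous_image)
  then have closed_trace: "closedin (top_of_set (\<phi> ` S)) (G \<inter> \<phi> ` S)"
    using assms(4) by (simp add: compactly_closed_def)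
  have "closedin (top_of_set S) (S \<inter> \<phi> -` (G \<inter> \<phi> ` S))"
    by (rule continuous_closedin_preimage_gen[OF assms(3) _ closed_trace]) auto
  moreover have "S \<inter> \<phi> -` (G \<inter> \<phi> ` S) = S \<inter> \<phi> -` G" by blast
  ultimately show ?thesis
    using closedin_closed_trans[OF _ assms(2)] by simp
qed

lemma kkm_tvs_nat:
  fixes p :: "nat \<Rightarrow> 'a::{real_vector,topological_space}"
  assumes tvs: "tvs TYPE('a)"
    and cc: "\<And>i. i \<le> n \<Longrightarrow> compactly_closed (G i)"
    and kkm: "\<And>B. B \<subseteq> {..n} \<Longrightarrow> B \<noteq> {} \<Longrightarrow> convex hull (p ` B) \<subseteq> (\<Union>i\<in>B. G i)"
  shows "\<exists>z. \<forall>i\<le>n. z \<in> G i"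
proof -
  define \<phi> where "\<phi> x = (\<Sum>i\<le>n. x i *\<^sub>R p i)" for x :: "nat \<Rightarrow> real"
  have cont: "continuous_on S \<phi>" for S
    unfolding \<phi>_def
    by (intro tvs_continuous_on_sum tvs_continuous_on_scaleR tvs continuous_on_const
        continuous_on_coordinate)
  have "\<exists>x\<in>standard_simplex n. \<forall>i\<le>n. x \<in> standard_simplex n \<inter> \<phi> -` G i"
  proof (rule kkm_standard_simplex)
    show "closed (standard_simplex n \<inter> \<phi> -` G i)" if "i \<le> n" for i
      using compact_standard_simplex closed_standard_simplex cont cc[OF that]
      by (rule closed_preimage_compactly_closed)
    show "\<exists>i\<le>n. 0 < x i \<and> x \<in> standard_simplex n \<inter> \<phi> -` G i"
      if x: "x \<in> standard_simplex n" for x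
    proof -
      have "convex hull (p ` {i. i \<le> n \<and> 0 < x i}) \<subseteq> (\<Union>i\<in>{i. i \<le> n \<and> 0 < x i}. G i)"
        using standard_simplex_support_nonempty[OF x] by (intro kkm) auto
      with barycentre_in_convex_hull[OF x, of p] obtain i where "i \<le> n" "0 < x i" "\<phi> x \<in> G i"
        unfolding \<phi>_def by blast
      with x show ?thesis by auto
    qed
  qed
  then obtain x where "\<forall>i\<le>n. \<phi> x \<in> G i" by auto
  then show ?thesis by blast
qed

theorem kkm_tvs:
  fixes p :: "'i \<Rightarrow> 'a::{real_vector,topological_space}"
  assumes tvs: "tvs TYPE('a)" and "finite I"
    and cc: "\<And>i. i \<in> I \<Longrightarrow> compactly_closed (G i)"
    and kkm: "\<And>B. B \<subseteq> I \<Longrightarrow> B \<noteq> {} \<Longrightarrow> convex hull (p ` B) \<subseteq> (\<Union>i\<in>B. G i)"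
  shows "\<exists>z. \<forall>i\<in>I. z \<in> G i"
proof (cases "I = {}")
  case False
  obtain n where n: "card I = Suc n"
    using False \<open>finite I\<close> by (metis card_0_eq not0_implies_Suc)
  obtain e where "bij_betw e {0..<card I} I"
    using ex_bij_betw_nat_finite[OF \<open>finite I\<close>] ..
  then have e: "bij_betw e {..n} I"
    by (simp add: n atLeast0LessThan lessThan_Suc_atMost)
  have "\<exists>z. \<forall>j\<le>n. z \<in> G (e j)"
  proof (rule kkm_tvs_nat[OF tvs])
    show "compactly_closed (G (e j))" if "j \<le> n" for j
      using cc bij_betwE[OF e] that by auto
    show "convex hull ((\<lambda>j. p (e j)) ` B) \<subseteq> (\<Union>j\<in>B. G (e j))"
      if "B \<subseteq> {..n}" "B \<noteq> {}" for B
      using kkm[of "e ` B"] bij_betw_imp_surj_on[OF e] that by (auto simp: image_comp)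
  qed
  then show ?thesis
    using bij_betw_imp_surj_on[OF e] by auto
qed simp

lemma compactly_closed_family_Inter_in_compact:
  fixes F :: "'k \<Rightarrow> 'a::topological_space set"
  assumes "compact M"
    and cc: "\<And>y. y \<in> K \<Longrightarrow> compactly_closed (F y)"
    and L: "finite L" "L \<subseteq> K" "\<Inter>(F ` L) \<subseteq> M"
    and fip: "\<And>Y. finite Y \<Longrightarrow> Y \<subseteq> K \<Longrightarrow> \<Inter>(F ` Y) \<noteq> {}"
  shows "\<exists>x\<in>M. \<forall>y\<in>K. x \<in> F y"
proof -
  have "compactin (top_of_set M) M"
    using \<open>compact M\<close> by (simp add: compactin_subtopology)
  moreover have "closedin (top_of_set M) (F y \<inter> M)" if "y \<in> K" for y
    using cc[OF that] \<open>compact M\<close> by (simp add: compactly_closed_def)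
  moreover have "M \<inter> \<Inter>\<F> \<noteq> {}" if \<F>: "finite \<F>" "\<F> \<subseteq> (\<lambda>y. F y \<inter> M) ` K" for \<F>
  proof -
    obtain Y where Y: "finite Y" "Y \<subseteq> K" "\<F> = (\<lambda>y. F y \<inter> M) ` Y"
      using finite_subset_image[OF \<F>] by blast
    obtain x where x: "x \<in> \<Inter>(F ` (Y \<union> L))"
      using fip[of "Y \<union> L"] Y L by blast
    then have "x \<in> M" using L by auto
    with x Y show ?thesis by blast
  qed
  ultimately have "M \<inter> \<Inter>((\<lambda>y. F y \<inter> M) ` K) \<noteq> {}"
    unfolding compactin_fip by (metis (no_types, lifting) imageE)
  then show ?thesis by blast
qed

section \<open>Solution sets of the vector inclusion problem\<close>

lemma Inter_solution_sets_nonempty: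
  fixes D :: "'x::{real_vector,topological_space} set"
    and f :: "'x \<Rightarrow> 'k \<Rightarrow> 'y::real_vector set" and g :: "'x \<Rightarrow> 'x \<Rightarrow> 'y set"
  assumes tvsX: "tvs TYPE('x)"
    and convD: "convex D"
    and i: "\<forall>y\<in>K. compactly_closed {x\<in>D. f x y \<subseteq> C}"
    and ii: "\<forall>A. A \<noteq> {} \<and> finite A \<and> A \<subseteq> D \<longrightarrow>
               (\<forall>z\<in>convex hull A. \<exists>x\<in>A. g x z \<subseteq> uminus ` C)"
    and iii: "\<forall>y\<in>K. \<exists>z\<in>D. \<forall>x\<in>D. g z x \<subseteq> uminus ` C \<longrightarrow> f x y \<subseteq> C"
    and Y: "finite Y" "Y \<subseteq> K"
  shows "(\<Inter>y\<in>Y. {x\<in>D. f x y \<subseteq> C}) \<noteq> {}"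
proof -
  obtain z where zD: "\<And>y. y \<in> K \<Longrightarrow> z y \<in> D"
    and z: "\<And>y x. y \<in> K \<Longrightarrow> x \<in> D \<Longrightarrow> g (z y) x \<subseteq> uminus ` C \<Longrightarrow> f x y \<subseteq> C"
    using iii by metis
  have "\<exists>w. \<forall>y\<in>Y. w \<in> {x\<in>D. f x y \<subseteq> C}"
  proof (rule kkm_tvs[OF tvsX \<open>finite Y\<close>])
    show "compactly_closed {x\<in>D. f x y \<subseteq> C}" if "y \<in> Y" for y
      using i that Y by blast
    show "convex hull (z ` B) \<subseteq> (\<Union>y\<in>B. {x\<in>D. f x y \<subseteq> C})" if B: "B \<subseteq> Y" "B \<noteq> {}" for B
    proof
      fix w assume w: "w \<in> convex hull (z ` B)"
      have zB: "z ` B \<subseteq> D" using zD B Y by blast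
      then have "w \<in> D" using hull_minimal[of _ D convex, OF zB convD] w by blast
      have "\<exists>x\<in>z ` B. g x w \<subseteq> uminus ` C"
        using ii[rule_format, of "z ` B" w] zB w B finite_subset[OF _ \<open>finite Y\<close>] by simp
      then obtain y where y: "y \<in> B" "g (z y) w \<subseteq> uminus ` C" by blast
      with z \<open>w \<in> D\<close> B Y have "f w y \<subseteq> C" by blast
      with y \<open>w \<in> D\<close> show "w \<in> (\<Union>y\<in>B. {x\<in>D. f x y \<subseteq> C})" by blast
    qed
  qed
  then show ?thesis by blast
qed

(* HOL-Homology brings HOL-Cardinals' constant cone into scope, which would capture the name
   in the statement below. *)
hide_const (open) Wellorder_Constructions.cone

theorem corollary3p4:
  fixes D :: "'x::{real_vector,topological_space} set"
    and K :: "'k set"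
    and C :: "'y::{real_vector,topological_space} set"
    and f :: "'x \<Rightarrow> 'k \<Rightarrow> 'y set"
    and g :: "'x \<Rightarrow> 'x \<Rightarrow> 'y set"
    and M :: "'x set" and L :: "'k set"
  assumes tvsX: "tvs TYPE('x)"
    and tvsY: "tvs TYPE('y)"
    and convD: "convex D"
    and Kne: "K \<noteq> {}"
    and coneC: "cone C"
    and i: "\<forall>y\<in>K. compactly_closed {x\<in>D. f x y \<subseteq> C}"
    and ii: "\<forall>A. A \<noteq> {} \<and> finite A \<and> A \<subseteq> D \<longrightarrow>
               (\<forall>z\<in>convex hull A. \<exists>x\<in>A. g x z \<subseteq> uminus ` C)"
    and iii: "\<forall>y\<in>K. \<exists>z\<in>D. \<forall>x\<in>D. g z x \<subseteq> uminus ` C \<longrightarrow> f x y \<subseteq> C"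
    and Mne: "M \<noteq> {}" and Mcpt: "compact M" and MD: "M \<subseteq> D"
    and Lfin: "finite L" and LK: "L \<subseteq> K"
    and iv: "\<forall>x\<in>D - M. \<exists>y\<in>L. \<not> f x y \<subseteq> C"
  shows "\<exists>xb\<in>M. \<forall>y\<in>K. f xb y \<subseteq> C"
proof -
  define F where "F y = {x\<in>D. f x y \<subseteq> C}" for y
  have ccF: "compactly_closed (F y)" if "y \<in> K" for y
    using i that by (simp add: F_def)
  have fip: "\<Inter>(F ` Y) \<noteq> {}" if "finite Y" "Y \<subseteq> K" for Y
    using Inter_solution_sets_nonempty[OF tvsX convD i ii iii that] by (simp add: F_def)
  obtain k where "k \<in> K" using Kne by blast
  have "\<Inter>(F ` insert k L) \<subseteq> M"
  proof
    fix x assume "x \<in> \<Inter>(F ` insert k L)"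
    then have "x \<in> D" "\<forall>y\<in>L. f x y \<subseteq> C" by (auto simp: F_def)
    with iv show "x \<in> M" by blast
  qed
  then obtain x where "x \<in> M" "\<forall>y\<in>K. x \<in> F y"
    using compactly_closed_family_Inter_in_compact[OF Mcpt ccF _ _ _ fip] Lfin LK \<open>k \<in> K\<close>
    by (metis finite_insert insert_subset)
  then show ?thesis by (auto simp: F_def)
qed

end
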